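(* Let $i(C,R)$ be an initial rule and $\mathrm{H}$ a set of Horn rules. Then $(\triangleright^{1} i(C,R)\ \triangleright^{0}\mathrm{H})\preceq i(C,R)\oplus\mathbf{G}(\mathrm{H})$; that is, every g-sequent obtained by an application of $i(C,R)$ followed by zero or more applications of rules from $\mathrm H$ is a conclusion of the initial rule $i(C,R)\oplus\mathbf G(\mathrm H)$.
   Context: Fix a countably infinite set $\mathtt{S}$ of sequents (atomic labels), a set $\mathcal{U}$ of vertices, and a non-empty finite set $\mathtt{E}$ of edge types. A g-sequent is $\mathcal{G}=(\mathcal{V},\mathcal{E},\mathcal{L})$ with $\mathcal{V}\subseteq\mathcal{U}$, $\mathcal{E}=\{\mathcal{E}_a\mid a\in\mathtt{E}\}$, $\mathcal{E}_a\subseteq\mathcal{V}\times\mathcal{V}$, $\mathcal{L}:\mathcal{V}\to\mathtt{S}$; written $\Gamma\vdash\Delta$ with $\Gamma$ the set of edge atoms $w\mathcal{E}_a u$ ($(w,u)\in\mathcal{E}_a$) and $\Delta$ the set of prefixed sequents $w:S$ ($\mathcal{L}(w)=S$); $\mathtt{PS}=\mathcal{U}\times\mathtt{S}$; commas denote disjoint union. Let $\overline{\mathtt E}=\{\bar a\mid a\in\mathtt E\}$, $\bar{\bar z}=z$, $\overline{x_1\cdots x_n}=\bar x_n\cdots\bar x_1$, $\varepsilon$ the empty string. Paths: $\mathcal{G}\models u\xrightarrow{a}w$ iff $(u,w)\in\mathcal{E}_a$; $\mathcal{G}\models u\xrightarrow{\bar a}w$ iff $(w,u)\in\mathcal{E}_a$;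 $u\xrightarrow{\varepsilon}w$ iff $u=w$; $u\xrightarrow{xs}w$ iff some $v$ has $u\xrightarrow{x}v$ and $v\xrightarrow{s}w$; $u\xrightarrow{\mathscr L}w$ iff $u\xrightarrow{s}w$ for some $s\in\mathscr L$. An $\mathtt{E}$-system is a finite set $\mathbf{G}$ of production rules $x\longrightarrow t$ with $x\in\mathtt{E}\cup\overline{\mathtt{E}}$, $t$ a string over $\mathtt E\cup\overline{\mathtt E}$, closed under $x\longrightarrow t\mapsto\bar x\longrightarrow\bar t$; $\mathbf{G}(s)=\{t\mid s\longrightarrow^*_{\mathbf{G}}t\}$ where $\longrightarrow^*_{\mathbf G}$ is the reflexive-transitive closure of one-step rewriting of a single occurrence of a left side. A constraint is a finite tree $C=(V,E,L)$ with $V\subseteq\mathcal U$, each edge $(w,u)\in E$ labelled $L(w,u)=\mathbf G'(a)$ for some $a\in\mathtt E$ and $\mathtt E$-system $\mathbf G'$. A g-sequent $\mathcal G$ with $V\subseteq\mathcal U(\mathcal G)$ satisfies $C$ iff $\mathcal G\models w\xrightarrow{\mathbf G'(a)}u$ for every edge with $L(w,u)=\mathbf G'(a)$. A sequent constraint is $R\subseteq\mathtt S^n\times2^{\mathtt{PS}}$; $S_1,\dots,S_n,\Delta$ satisfy $R$ iff $(S_{\pi(1)},\dots,S_{\pi(n)},\Delta)\in R$ for some permutation $\pi$. An initial rule $i(C,R)$ has no premises and conclusion any $\Gamma\vdash\Delta=(\mathcal V,\mathcal E,\mathcal L)$ that satisfies $C=(V,E,L)$, $V=\{w_1,\dots,w_n\}$,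 such that $\mathcal L(w_1),\dots,\mathcal L(w_n)$ and $\Delta\setminus\{w_i:\mathcal L(w_i)\mid i\in[n]\}$ satisfy $R$. For $s=x_1\cdots x_n$, $w\mathcal{E}_s u$ abbreviates edge atoms $w\mathcal{E}_{x_1}v_1,\dots,v_{n-1}\mathcal{E}_{x_n}u$, with $v\mathcal E_{\bar a}z$ meaning $z\mathcal E_a v$ and $w\mathcal E_\varepsilon u$ meaning $w=u$. A forward Horn rule $h_f$ (for $a\in\mathtt E$, string $s$) has premise $\Gamma,w\mathcal{E}_s u,w\mathcal{E}_a u\vdash\Delta$ and conclusion $\Gamma,w\mathcal{E}_s u\vdash\Delta$; a backward Horn rule $h_b$ is the same with $w\mathcal{E}_a u$ replaced by $u\mathcal{E}_a w$. $\mathbf{G}(h_f)=\{a\longrightarrow s,\bar a\longrightarrow\bar s\}$, $\mathbf{G}(h_b)=\{\bar a\longrightarrow s,a\longrightarrow\bar s\}$, and $\mathbf G(\mathrm H)$ is the union over $\mathrm H$. Absorb: $C\oplus\mathbf G$ replaces every label $\mathbf G'(a)$ by $(\mathbf G'\cup\mathbf G)(a)$, and $i(C,R)\oplus\mathbf G=i(C\oplus\mathbf G,R)$. Simulation: for rule sets, $\mathrm R_1\preceq\mathrm R_2$ iff whenever $\mathcal G$ is derivable from $\mathcal G_1,\dots,\mathcal G_n$ using rules of $\mathrm R_1$, it is derivable from $\mathcal G_1,\dots,\mathcal G_n$ using rules of $\mathrm R_2$. An ordered rule set $\triangleright^{i_1}\mathrm R_1\cdots\triangleright^{i_k}\mathrm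 R_k$ ($i_j\in\{0,1\}$) is the rule set $\mathrm R_1\cup\dots\cup\mathrm R_k$ restricted to derivations that (read from top to bottom) first apply at least $i_1$ rules of $\mathrm R_1$, then at least $i_2$ rules of $\mathrm R_2$, etc.; a singleton $\{\rho\}$ is written $\rho$. *)

theory Defs
  imports Main "HOL-Library.Countable_Set"
begin

text \<open>Letters over E and its barred copy: Pos a = a, Neg a = bar a.\<close>
datatype 'e sym = Pos 'e | Neg 'e

fun bar :: "'e sym \<Rightarrow> 'e sym" where
  "bar (Pos a) = Neg a"
| "bar (Neg a) = Pos a"

definition bars :: "'e sym list \<Rightarrow> 'e sym list" where
  "bars xs = rev (map bar xs)"

type_synonym 'e production = "'e sym \<times> 'e sym list"

definition esystem :: "'e production set \<Rightarrow> bool" where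
  "esystem G \<longleftrightarrow> finite G \<and> (\<forall>(x, t) \<in> G. (bar x, bars t) \<in> G)"

definition rewrite1 :: "'e production set \<Rightarrow> 'e sym list \<Rightarrow> 'e sym list \<Rightarrow> bool" where
  "rewrite1 G s t \<longleftrightarrow> (\<exists>p q x r. (x, r) \<in> G \<and> s = p @ [x] @ q \<and> t = p @ r @ q)"

definition lang :: "'e production set \<Rightarrow> 'e sym list \<Rightarrow> 'e sym list set" where
  "lang G s = {t. (rewrite1 G)\<^sup>*\<^sup>* s t}"

record ('u, 'e, 's) gseq =
  gV :: "'u set"
  gE :: "'e \<Rightarrow> ('u \<times> 'u) set"
  gL :: "'u \<Rightarrow> 's"

definition wf_gseq :: "('u, 'e, 's) gseq \<Rightarrow> bool" where
  "wf_gseq G \<longleftrightarrow> (\<forall>a. gE G a \<subseteq> gV G \<times> gV G)"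

text \<open>Delta: the set of prefixed sequents w:L(w).\<close>
definition Delta :: "('u, 'e, 's) gseq \<Rightarrow> ('u \<times> 's) set" where
  "Delta G = {(w, gL G w) | w. w \<in> gV G}"

fun estep :: "('u, 'e, 's) gseq \<Rightarrow> 'u \<Rightarrow> 'e sym \<Rightarrow> 'u \<Rightarrow> bool" where
  "estep G u (Pos a) w \<longleftrightarrow> (u, w) \<in> gE G a"
| "estep G u (Neg a) w \<longleftrightarrow> (w, u) \<in> gE G a"

fun path :: "('u, 'e, 's) gseq \<Rightarrow> 'u \<Rightarrow> 'e sym list \<Rightarrow> 'u \<Rightarrow> bool" where
  "path G u [] w \<longleftrightarrow> u = w"
| "path G u (x # s) w \<longleftrightarrow> (\<exists>v. estep G u x v \<and> path G v s w)"

definition path_lang :: "('u, 'e, 's) gseq \<Rightarrow> 'u \<Rightarrow> 'e sym list set \<Rightarrow> 'u \<Rightarrow> bool" where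
  "path_lang G u L w \<longleftrightarrow> (\<exists>s \<in> L. path G u s w)"

text \<open>Edge labels G'(a) are represented by the pair (G', a).\<close>
record ('u, 'e) constraint =
  cV :: "'u set"
  cE :: "('u \<times> 'u) set"
  cL :: "'u \<times> 'u \<Rightarrow> 'e production set \<times> 'e"

definition is_tree :: "'u set \<Rightarrow> ('u \<times> 'u) set \<Rightarrow> bool" where
  "is_tree V E \<longleftrightarrow> finite V \<and> V \<noteq> {} \<and> E \<subseteq> V \<times> V \<and> card E + 1 = card V
     \<and> (\<forall>x \<in> V. \<forall>y \<in> V. (x, y) \<in> (E \<union> E\<inverse>)\<^sup>*)"

definition is_constraint :: "('u, 'e) constraint \<Rightarrow> bool" where
  "is_constraint C \<longleftrightarrow> is_tree (cV C) (cE C) \<and> (\<forall>e \<in> cE C. esystem (fst (cL C e)))"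

definition satisfies :: "('u, 'e, 's) gseq \<Rightarrow> ('u, 'e) constraint \<Rightarrow> bool" where
  "satisfies G C \<longleftrightarrow> cV C \<subseteq> gV G \<and>
     (\<forall>(w, u) \<in> cE C. path_lang G w (lang (fst (cL C (w, u))) [Pos (snd (cL C (w, u)))]) u)"

text \<open>Sequent constraint R \<subseteq> S^n \<times> 2^PS, tuples as lists of length n.\<close>
definition sat_seqc :: "'s list \<Rightarrow> ('u \<times> 's) set \<Rightarrow> ('s list \<times> ('u \<times> 's) set) set \<Rightarrow> bool" where
  "sat_seqc Ss D R \<longleftrightarrow> (\<exists>\<pi>. bij_betw \<pi> {..<length Ss} {..<length Ss} \<and>
      (map (\<lambda>i. Ss ! \<pi> i) [0..<length Ss], D) \<in> R)"

definition is_initial :: "('u, 'e) constraint \<Rightarrow> ('s list \<times> ('u \<times> 's) set) set \<Rightarrow> bool" where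
  "is_initial C R \<longleftrightarrow> is_constraint C \<and> (\<forall>(Ss, D) \<in> R. length Ss = card (cV C))"

definition initial_concl :: "('u, 'e) constraint \<Rightarrow> ('s list \<times> ('u \<times> 's) set) set
     \<Rightarrow> ('u, 'e, 's) gseq \<Rightarrow> bool" where
  "initial_concl C R G \<longleftrightarrow> wf_gseq G \<and> satisfies G C \<and>
     (\<exists>ws. distinct ws \<and> set ws = cV C \<and>
        sat_seqc (map (gL G) ws) (Delta G - {(w, gL G w) | w. w \<in> cV C}) R)"

datatype 'e horn = HFwd 'e "'e sym list" | HBwd 'e "'e sym list"

text \<open>horn_app h P Q: Q is obtained from premise P by one application of h.\<close>
fun horn_app :: "'e horn \<Rightarrow> ('u, 'e, 's) gseq \<Rightarrow> ('u, 'e, 's) gseq \<Rightarrow> bool" where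
  "horn_app (HFwd a s) P Q \<longleftrightarrow> wf_gseq P \<and> wf_gseq Q \<and> gV P = gV Q \<and> gL P = gL Q \<and>
     (\<exists>w u. path Q w s u \<and> (w, u) \<notin> gE Q a \<and> gE P = (gE Q)(a := insert (w, u) (gE Q a)))"
| "horn_app (HBwd a s) P Q \<longleftrightarrow> wf_gseq P \<and> wf_gseq Q \<and> gV P = gV Q \<and> gL P = gL Q \<and>
     (\<exists>w u. path Q w s u \<and> (u, w) \<notin> gE Q a \<and> gE P = (gE Q)(a := insert (u, w) (gE Q a)))"

fun horn_G :: "'e horn \<Rightarrow> 'e production set" where
  "horn_G (HFwd a s) = {(Pos a, s), (Neg a, bars s)}"
| "horn_G (HBwd a s) = {(Neg a, s), (Pos a, bars s)}"

definition horn_G_set :: "'e horn set \<Rightarrow> 'e production set" where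
  "horn_G_set H = (\<Union>h \<in> H. horn_G h)"

definition absorb :: "('u, 'e) constraint \<Rightarrow> 'e production set \<Rightarrow> ('u, 'e) constraint" where
  "absorb C G = C\<lparr>cL := (\<lambda>e. (fst (cL C e) \<union> G, snd (cL C e)))\<rparr>"

text \<open>Derivations with zero or more Horn-rule applications (read top to bottom).\<close>
definition horn_derives :: "'e horn set \<Rightarrow> ('u, 'e, 's) gseq \<Rightarrow> ('u, 'e, 's) gseq \<Rightarrow> bool" where
  "horn_derives H = (\<lambda>P Q. \<exists>h \<in> H. horn_app h P Q)\<^sup>*\<^sup>*"

end

theory Submission
  imports Defs
begin

text \<open>A Horn step only removes an edge \<open>(w, u)\<close> of type \<open>a\<close> whose endpoints are already joined
  by an \<open>s\<close>-path in the conclusion. A path of the premise that uses the removed edge can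
  therefore be rerouted along \<open>s\<close> (or along \<open>bars s\<close> when the edge is traversed backwards),
  which rewrites its word by a production of \<open>G(h)\<close>. Along a whole derivation, the words
  witnessing the constraint edges stay in the languages \<open>(G' \<union> G(H))(a)\<close>, while vertices,
  labels, and hence \<open>\<Delta>\<close> and the sequent constraint, are untouched.\<close>

lemma path_append: "path G x (s @ t) y \<longleftrightarrow> (\<exists>v. path G x s v \<and> path G v t y)"
  by (induction s arbitrary: x) auto

lemma estep_bar: "estep G x c v \<Longrightarrow> estep G v (bar c) x"
  by (cases c) auto

lemma path_bars: "path G x s y \<Longrightarrow> path G y (bars s) x"
proof (induction s arbitrary: x)
  case Nil
  then show ?case by (simp add: bars_def)
next
  case (Cons c s)
  then obtain v where "estep G x c v" "path G v s y" by auto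
  with Cons.IH show ?case
    by (auto simp: bars_def path_append intro!: estep_bar)
qed

lemma rewrite1_append:
  "rewrite1 G s t \<Longrightarrow> rewrite1 G (p @ s @ q) (p @ t @ q)"
  unfolding rewrite1_def by (metis append.assoc)

lemma rtranclp_rewrite1_append:
  assumes "(rewrite1 G)\<^sup>*\<^sup>* s t" and "(rewrite1 G)\<^sup>*\<^sup>* s' t'"
  shows "(rewrite1 G)\<^sup>*\<^sup>* (s @ s') (t @ t')"
proof -
  have append_context: "(rewrite1 G)\<^sup>*\<^sup>* (p @ s @ q) (p @ t @ q)"
    if "(rewrite1 G)\<^sup>*\<^sup>* s t" for p q s t
    using that
    by (induction rule: rtranclp_induct) (auto intro: rtranclp.rtrancl_into_rtrancl rewrite1_append)
  have "(rewrite1 G)\<^sup>*\<^sup>* ([] @ s @ s') ([] @ t @ s')" by (rule append_context[OF assms(1)])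
  moreover have "(rewrite1 G)\<^sup>*\<^sup>* (t @ s' @ []) (t @ t' @ [])" by (rule append_context[OF assms(2)])
  ultimately show ?thesis by simp
qed

lemma rtranclp_rewrite1_mono:
  "G \<subseteq> G' \<Longrightarrow> (rewrite1 G)\<^sup>*\<^sup>* s t \<Longrightarrow> (rewrite1 G')\<^sup>*\<^sup>* s t"
  using mono_rtranclp[of "rewrite1 G" "rewrite1 G'"] unfolding rewrite1_def by blast

lemma rtranclp_rewrite1_production: "(x, r) \<in> G \<Longrightarrow> (rewrite1 G)\<^sup>*\<^sup>* [x] r"
  unfolding rewrite1_def by (intro r_into_rtranclp exI[of _ "[]"]) auto

lemma lang_rewrite_closed:
  "t \<in> lang G s \<Longrightarrow> G' \<subseteq> G \<Longrightarrow> (rewrite1 G')\<^sup>*\<^sup>* t t' \<Longrightarrow> t' \<in> lang G s"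
  unfolding lang_def using rtranclp_rewrite1_mono by (metis mem_Collect_eq rtranclp_trans)

lemma lang_mono: "G \<subseteq> G' \<Longrightarrow> lang G s \<subseteq> lang G' s"
  unfolding lang_def using rtranclp_rewrite1_mono by blast

lemma horn_app_same_vertices_labels:
  "horn_app h P Q \<Longrightarrow> wf_gseq Q \<and> gV Q = gV P \<and> gL Q = gL P"
  by (cases h) auto

lemma bar_bar [simp]: "bar (bar c) = c"
  by (cases c) auto

lemma bars_bars [simp]: "bars (bars s) = s"
  by (induction s) (simp_all add: bars_def)

lemma horn_app_removed_edge:
  assumes "horn_app h P Q"
  obtains a w u s where "path Q w s u" "(Pos a, s) \<in> horn_G h" "(Neg a, bars s) \<in> horn_G h"
    "gE P = (gE Q)(a := insert (w, u) (gE Q a))"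
proof (cases h)
  case (HFwd a s)
  with assms that show thesis by auto
next
  case (HBwd a s)
  with assms obtain w u where "path Q w s u" "gE P = (gE Q)(a := insert (u, w) (gE Q a))"
    by auto
  with HBwd that[of u "bars s" w a] show thesis by (auto intro: path_bars)
qed

lemma estep_horn_app:
  assumes h: "horn_app h P Q" and e: "estep P x c v"
  shows "\<exists>t. (rewrite1 (horn_G h))\<^sup>*\<^sup>* [c] t \<and> path Q x t v"
proof -
  obtain a w u s where p: "path Q w s u" and fwd: "(Pos a, s) \<in> horn_G h"
    and bwd: "(Neg a, bars s) \<in> horn_G h" and E: "gE P = (gE Q)(a := insert (w, u) (gE Q a))"
    using horn_app_removed_edge[OF h] .
  consider "c = Pos a" "(x, v) = (w, u)" | "c = Neg a" "(v, x) = (w, u)" | "estep Q x c v"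
    using e E by (cases c) (auto split: if_splits)
  then show ?thesis
  proof cases
    case 1
    then show ?thesis using p fwd by (auto intro: rtranclp_rewrite1_production)
  next
    case 2
    then show ?thesis using path_bars[OF p] bwd by (auto intro: rtranclp_rewrite1_production)
  next
    case 3
    then show ?thesis by (intro exI[of _ "[c]"]) auto
  qed
qed

lemma path_horn_app:
  assumes h: "horn_app h P Q"
  shows "path P x s y \<Longrightarrow> \<exists>t. (rewrite1 (horn_G h))\<^sup>*\<^sup>* s t \<and> path Q x t y"
proof (induction s arbitrary: x)
  case Nil
  then show ?case by auto
next
  case (Cons c s)
  then obtain v where e: "estep P x c v" and ps: "path P v s y" by auto
  obtain t1 where t1: "(rewrite1 (horn_G h))\<^sup>*\<^sup>* [c] t1" "path Q x t1 v"
    using estep_horn_app[OF h e] by blast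
  obtain t2 where t2: "(rewrite1 (horn_G h))\<^sup>*\<^sup>* s t2" "path Q v t2 y"
    using Cons.IH[OF ps] by blast
  have "(rewrite1 (horn_G h))\<^sup>*\<^sup>* ([c] @ s) (t1 @ t2)"
    by (rule rtranclp_rewrite1_append[OF t1(1) t2(1)])
  with t1(2) t2(2) show ?case by (intro exI[of _ "t1 @ t2"]) (auto simp: path_append)
qed

lemma path_lang_horn_derives:
  assumes "horn_derives H P Q" and "horn_G_set H \<subseteq> G"
    and "path_lang P w (lang G s) u"
  shows "path_lang Q w (lang G s) u"
  using assms(1,3) unfolding horn_derives_def
proof (induction rule: rtranclp_induct)
  case base
  then show ?case .
next
  case (step Q Q')
  then obtain h where "h \<in> H" and h: "horn_app h Q Q'" by auto
  then have sub: "horn_G h \<subseteq> G" using assms(2) unfolding horn_G_set_def by auto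
  from step obtain t where t: "t \<in> lang G s" "path Q w t u" unfolding path_lang_def by auto
  then obtain t' where "(rewrite1 (horn_G h))\<^sup>*\<^sup>* t t'" "path Q' w t' u"
    using path_horn_app[OF h] by blast
  with t sub show ?case unfolding path_lang_def by (blast intro: lang_rewrite_closed)
qed

lemma horn_derives_same_vertices_labels:
  assumes "horn_derives H P Q" and "wf_gseq P"
  shows "wf_gseq Q \<and> gV Q = gV P \<and> gL Q = gL P"
  using assms unfolding horn_derives_def
  by (induction rule: rtranclp_induct) (auto dest: horn_app_same_vertices_labels)

lemma satisfies_absorb_horn_derives:
  assumes "satisfies P C" and "wf_gseq P" and "horn_derives H P Q"
  shows "satisfies Q (absorb C (horn_G_set H))"
proof -
  have "path_lang Q w (lang (fst (cL C (w, u)) \<union> horn_G_set H) [Pos (snd (cL C (w, u)))]) u"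
    if "(w, u) \<in> cE C" for w u
  proof (rule path_lang_horn_derives[OF assms(3)])
    show "path_lang P w (lang (fst (cL C (w, u)) \<union> horn_G_set H) [Pos (snd (cL C (w, u)))]) u"
      using assms(1) that lang_mono[of "fst (cL C (w, u))"]
      unfolding satisfies_def path_lang_def by blast
  qed simp
  moreover have "gV Q = gV P" using horn_derives_same_vertices_labels[OF assms(3,2)] by simp
  ultimately show ?thesis using assms(1) unfolding satisfies_def absorb_def by auto
qed

theorem mainTheorem4:
  fixes C :: "('u, 'e::finite) constraint"
    and R :: "('s list \<times> ('u \<times> 's) set) set"
    and H :: "'e horn set"
    and G0 G :: "('u, 'e, 's) gseq"
  assumes "infinite (UNIV :: 's set)" and "countable (UNIV :: 's set)"
    and "is_initial C R"
    and "finite H"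
    and "initial_concl C R G0"
    and "horn_derives H G0 G"
  shows "initial_concl (absorb C (horn_G_set H)) R G"
proof -
  have wf0: "wf_gseq G0" and sat0: "satisfies G0 C" using assms(5) unfolding initial_concl_def by auto
  have same: "wf_gseq G" "gV G = gV G0" "gL G = gL G0"
    using horn_derives_same_vertices_labels[OF assms(6) wf0] by auto
  then have "Delta G = Delta G0" unfolding Delta_def by simp
  moreover have "satisfies G (absorb C (horn_G_set H))"
    by (rule satisfies_absorb_horn_derives[OF sat0 wf0 assms(6)])
  ultimately show ?thesis
    using assms(5) same unfolding initial_concl_def by (simp add: absorb_def)
qed

end
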